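(* Let $n>1$ be an odd integer, $k\ge1$, and $p$ the smallest prime divisor of $n$. Then $\mathrm{C}^{n,k}_{\mathrm{RDH}}$ is $\frac{1}{p-1}$-secure against substitution attacks: for every function $\mathcal{F}:\mathbb{Z}_n^k\times\mathbb{Z}_n\to\mathbb{Z}_n^k\times\mathbb{Z}_n$, $$\Pr_{\mathbf{m},\mathbf{x}\leftarrow\mathbb{Z}_n^k,\ \mathbf{y}\leftarrow(\mathbb{Z}_n^* )^k}\big[\mathcal{F}(c)\ne c\ \wedge\ \mathcal{D}_{\mathbf{x}\|\mathbf{y}}(\mathcal{F}(c))\ne\bot\big]\le\frac{1}{p-1},\quad\text{where } c=\mathcal{E}_{\mathbf{x}\|\mathbf{y}}(\mathbf{m}).$$
   Context: For $\mathbf{y}\in(\mathbb{Z}_n^* )^k$ and $\mathbf{m}\in\mathbb{Z}_n^k$ let $\Upsilon_{\mathbf{y}}(\mathbf{m})=\sum_{i=1}^k m_iy_i\bmod n$. The code $\mathrm{C}^{n,k}_{\mathrm{RDH}}$ has source states $\mathbb{Z}_n^k$, keys $\mathbf{x}\|\mathbf{y}\in\mathbb{Z}_n^k\times(\mathbb{Z}_n^* )^k$, ciphertexts $\mathbf{c}\|t\in\mathbb{Z}_n^k\times\mathbb{Z}_n$, encryption $\mathcal{E}_{\mathbf{x}\|\mathbf{y}}(\mathbf{m})=(\mathbf{m}+\mathbf{x}\bmod n)\,\|\,\Upsilon_{\mathbf{y}}(\mathbf{m})$, and decryption $\mathcal{D}_{\mathbf{x}\|\mathbf{y}}(\mathbf{c}\|t)=\mathbf{c}-\mathbf{x}\bmod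 n$ if $\Upsilon_{\mathbf{y}}(\mathbf{c}-\mathbf{x})=t$ and $\bot$ otherwise. All random choices are uniform and independent; the forger $\mathcal{F}$ is an arbitrary (computationally unrestricted) function. *)

theory Defs
  imports "HOL-Probability.Probability" "HOL-Computational_Algebra.Primes"
begin

text \<open>Vectors in Z_n^k are extensional functions on {..<k} with values in {0..<n}
  (residues represented by their least nonnegative representatives).\<close>

definition Zn :: "int \<Rightarrow> int set" where
  "Zn n = {0..<n}"

definition Zn_units :: "int \<Rightarrow> int set" where
  "Zn_units n = {a \<in> {0..<n}. coprime a n}"

definition vecs :: "nat \<Rightarrow> int set \<Rightarrow> (nat \<Rightarrow> int) set" where
  "vecs k A = PiE {..<k} (\<lambda>_. A)"

definition Upsilon :: "int \<Rightarrow> nat \<Rightarrow> (nat \<Rightarrow> int) \<Rightarrow> (nat \<Rightarrow> int) \<Rightarrow> int" where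
  "Upsilon n k y m = (\<Sum>i<k. m i * y i) mod n"

definition RDH_enc :: "int \<Rightarrow> nat \<Rightarrow> (nat \<Rightarrow> int) \<Rightarrow> (nat \<Rightarrow> int) \<Rightarrow> (nat \<Rightarrow> int)
    \<Rightarrow> (nat \<Rightarrow> int) \<times> int" where
  "RDH_enc n k x y m = (restrict (\<lambda>i. (m i + x i) mod n) {..<k}, Upsilon n k y m)"

text \<open>Decryption; None plays the role of bottom.\<close>
definition RDH_dec :: "int \<Rightarrow> nat \<Rightarrow> (nat \<Rightarrow> int) \<Rightarrow> (nat \<Rightarrow> int) \<Rightarrow> (nat \<Rightarrow> int) \<times> int
    \<Rightarrow> (nat \<Rightarrow> int) option" where
  "RDH_dec n k x y ct =
     (let d = restrict (\<lambda>i. (fst ct i - x i) mod n) {..<k}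
      in if Upsilon n k y d = snd ct then Some d else None)"

definition ciphertexts :: "int \<Rightarrow> nat \<Rightarrow> ((nat \<Rightarrow> int) \<times> int) set" where
  "ciphertexts n k = vecs k (Zn n) \<times> Zn n"

definition subst_success_prob ::
  "int \<Rightarrow> nat \<Rightarrow> ((nat \<Rightarrow> int) \<times> int \<Rightarrow> (nat \<Rightarrow> int) \<times> int) \<Rightarrow> real" where
  "subst_success_prob n k F =
     measure_pmf.prob
       (pmf_of_set (vecs k (Zn n) \<times> vecs k (Zn n) \<times> vecs k (Zn_units n)))
       {(m, x, y). let c = RDH_enc n k x y m in F c \<noteq> c \<and> RDH_dec n k x y (F c) \<noteq> None}"

end

theory Submission
  imports Defs "HOL-Number_Theory.Cong"
begin

(* A successful substitution replaces c = E_{x||y}(m) by some c' = (u, t) \<noteq> c that decrypts, i.e.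
   sum_i (u_i - c_i) y_i + snd c \<equiv> t (mod n). Hence u \<noteq> fst c, and since both are vectors of
   reduced residues, u_j \<noteq> c_j (mod n) for some index j. For each a in {1..p-1}, replacing m_j, y_j
   by a^-1 m_j, a y_j (and x_j accordingly) does not change the ciphertext; these a and their
   differences are units modulo n because p is the least prime factor of n. The resulting p - 1 maps
   are injective on the successful samples and have pairwise disjoint images: two successes for the
   same c whose key vectors y, y' agree off j and satisfy a y_j \<equiv> b y'_j give
   (a - b) (u_j - c_j) y_j \<equiv> 0 (mod n). So (p - 1) |successes| \<le> |samples|. *)

lemma coprime_if_abs_less_prime_divisors:
  fixes d n p :: int
  assumes "d \<noteq> 0" and "\<bar>d\<bar> < p" and "\<forall>q. prime q \<and> q dvd n \<longrightarrow> p \<le> q"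
  shows "coprime d n"
proof (rule ccontr)
  assume "\<not> coprime d n"
  then have "\<not> is_unit (gcd d n)" by (simp add: coprime_iff_gcd_eq_1)
  moreover have "gcd d n \<noteq> 0" using assms(1) by simp
  ultimately obtain q where q: "prime q" "q dvd gcd d n" using prime_divisor_exists by blast
  then have "p \<le> q" using assms(3) dvd_trans[OF q(2) gcd_dvd2] by blast
  moreover have "\<bar>q\<bar> \<le> \<bar>d\<bar>" using dvd_trans[OF q(2) gcd_dvd1] by (rule dvd_imp_le_int[OF assms(1)])
  ultimately show False using assms(2) by linarith
qed

lemma card_le_of_disjoint_injective_images:
  assumes "finite B" and "finite I"
    and "\<And>i. i \<in> I \<Longrightarrow> inj_on (f i) A" and "\<And>i. i \<in> I \<Longrightarrow> f i ` A \<subseteq> B"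
    and "\<And>i j. i \<in> I \<Longrightarrow> j \<in> I \<Longrightarrow> i \<noteq> j \<Longrightarrow> f i ` A \<inter> f j ` A = {}"
  shows "card I * card A \<le> card B"
proof -
  have "card I * card A = (\<Sum>i\<in>I. card (f i ` A))"
    using assms(3) by (simp add: card_image)
  also have "\<dots> = card (\<Union>i\<in>I. f i ` A)"
    using assms(1,2,4,5) by (intro card_UN_disjoint[symmetric]) (auto intro: rev_finite_subset[OF assms(1)])
  also have "\<dots> \<le> card B"
    using assms(1,4) by (intro card_mono) auto
  finally show ?thesis .
qed

lemma vecs_memD: "f \<in> vecs k A \<Longrightarrow> i < k \<Longrightarrow> f i \<in> A"
  unfolding vecs_def by (simp add: PiE_iff)

lemma vecs_fun_upd: "f \<in> vecs k A \<Longrightarrow> j < k \<Longrightarrow> v \<in> A \<Longrightarrow> f(j := v) \<in> vecs k A"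
  unfolding vecs_def using PiE_fun_upd[of v "\<lambda>_. A" j f "{..<k}"] by (simp add: insert_absorb)

lemma LEAST_differ_vecs:
  assumes "u \<in> vecs k A" and "v \<in> vecs k A" and "u \<noteq> v"
  defines "j \<equiv> LEAST j. u j \<noteq> v j"
  shows "j < k" and "u j \<noteq> v j"
proof -
  obtain i where "u i \<noteq> v i" using assms(3) by (auto simp: fun_eq_iff)
  then show differ: "u j \<noteq> v j" unfolding j_def by (rule LeastI[where P = "\<lambda>j. u j \<noteq> v j"])
  show "j < k"
  proof (rule ccontr)
    assume "\<not> j < k"
    then have "u j = undefined" and "v j = undefined"
      using assms(1,2) PiE_arb[of _ "{..<k}" _ j] by (simp_all add: vecs_def)
    with differ show False by simp
  qed
qed

lemma Zn_mod: "n > 0 \<Longrightarrow> t mod n \<in> Zn n"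
  by (simp add: Zn_def)

lemma eq_if_cong_Zn: "a \<in> Zn n \<Longrightarrow> b \<in> Zn n \<Longrightarrow> [a = b] (mod n) \<Longrightarrow> a = b"
  unfolding Zn_def by (rule cong_less_imp_eq_int) auto

lemma RDH_enc_in_ciphertexts: "n > 0 \<Longrightarrow> RDH_enc n k x y m \<in> ciphertexts n k"
  by (simp add: RDH_enc_def ciphertexts_def vecs_def Zn_def Upsilon_def)

lemma Upsilon_eq_iff_cong:
  "Upsilon n k y m = Upsilon n k y' m' \<longleftrightarrow> [\<Sum>i<k. m i * y i = (\<Sum>i<k. m' i * y' i)] (mod n)"
  by (simp add: Upsilon_def cong_def)

lemma RDH_dec_not_None_cong:
  fixes m :: "nat \<Rightarrow> int"
  assumes "RDH_dec n k x y (u, t) \<noteq> None"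
  defines "c \<equiv> RDH_enc n k x y m"
  shows "[(\<Sum>i<k. (u i - fst c i) * y i) + snd c = t] (mod n)"
proof -
  have fst_c: "[u i - fst c i = u i - (m i + x i)] (mod n)" if "i \<in> {..<k}" for i
    using that unfolding c_def RDH_enc_def by (intro cong_diff) simp_all
  have snd_c: "[snd c = (\<Sum>i<k. m i * y i)] (mod n)"
    unfolding c_def RDH_enc_def Upsilon_def by simp
  have "[(\<Sum>i<k. (u i - fst c i) * y i) + snd c
       = (\<Sum>i<k. (u i - (m i + x i)) * y i) + (\<Sum>i<k. m i * y i)] (mod n)"
    using fst_c snd_c by (intro cong_add cong_sum cong_scalar_right) simp_all
  also have "(\<Sum>i<k. (u i - (m i + x i)) * y i) + (\<Sum>i<k. m i * y i) = (\<Sum>i<k. (u i - x i) * y i)"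
    by (simp add: sum.distrib[symmetric] algebra_simps)
  also have "[(\<Sum>i<k. (u i - x i) * y i) = t] (mod n)"
  proof -
    have "Upsilon n k y (restrict (\<lambda>i. (u i - x i) mod n) {..<k}) = t"
      using assms(1) by (auto simp: RDH_dec_def Let_def split: if_splits)
    then have "(\<Sum>i<k. ((u i - x i) mod n) * y i) mod n = t"
      by (simp add: Upsilon_def)
    then have "[(\<Sum>i<k. ((u i - x i) mod n) * y i) = t] (mod n)"
      by (metis cong_def mod_mod_trivial)
    moreover have "[(\<Sum>i<k. (u i - x i) * y i) = (\<Sum>i<k. ((u i - x i) mod n) * y i)] (mod n)"
      by (intro cong_sum cong_scalar_right) (simp add: cong_def)
    ultimately show ?thesis by (rule cong_trans[rotated])
  qed
  finally show ?thesis .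
qed

type_synonym rdh_sample = "(nat \<Rightarrow> int) \<times> (nat \<Rightarrow> int) \<times> (nat \<Rightarrow> int)"
type_synonym rdh_ciphertext = "(nat \<Rightarrow> int) \<times> int"

(* Meant for a * b \<equiv> 1 (mod n): the products m_j y_j and sums m_j + x_j are kept modulo n. *)
definition rescale :: "int \<Rightarrow> nat \<Rightarrow> int \<Rightarrow> int \<Rightarrow> rdh_sample \<Rightarrow> rdh_sample" where
  "rescale n j a b = (\<lambda>(m, x, y).
     (m(j := b * m j mod n), x(j := (m j + x j - b * m j) mod n), y(j := a * y j mod n)))"

definition sample_enc :: "int \<Rightarrow> nat \<Rightarrow> rdh_sample \<Rightarrow> rdh_ciphertext" where
  "sample_enc n k = (\<lambda>(m, x, y). RDH_enc n k x y m)"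

lemma sample_enc_rescale:
  assumes "[a * b = 1] (mod n)"
  shows "sample_enc n k (rescale n j a b w) = sample_enc n k w"
proof -
  obtain m x y where w: "w = (m, x, y)" by (cases w)
  define m' where "m' = m(j := b * m j mod n)"
  define x' where "x' = x(j := (m j + x j - b * m j) mod n)"
  define y' where "y' = y(j := a * y j mod n)"
  have rescale: "rescale n j a b w = (m', x', y')"
    by (simp add: w rescale_def m'_def x'_def y'_def)
  have sum_kept: "(m' i + x' i) mod n = (m i + x i) mod n" for i
    by (cases "i = j") (simp_all add: m'_def x'_def mod_simps)
  have "[m' i * y' i = m i * y i] (mod n)" for i
  proof (cases "i = j")
    case True
    have "[m' j * y' j = (b * m j) * (a * y j)] (mod n)"
      by (simp add: m'_def y'_def cong_mult)
    also have "(b * m j) * (a * y j) = (a * b) * (m j * y j)"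
      by (simp add: ac_simps)
    also have "[(a * b) * (m j * y j) = 1 * (m j * y j)] (mod n)"
      using assms by (rule cong_scalar_right)
    finally show ?thesis using True by simp
  qed (simp add: m'_def y'_def)
  then have "Upsilon n k y' m' = Upsilon n k y m"
    unfolding Upsilon_eq_iff_cong by (intro cong_sum)
  with sum_kept show ?thesis
    unfolding rescale by (simp add: w sample_enc_def RDH_enc_def)
qed

definition RDH_samples :: "int \<Rightarrow> nat \<Rightarrow> rdh_sample set" where
  "RDH_samples n k = vecs k (Zn n) \<times> vecs k (Zn n) \<times> vecs k (Zn_units n)"

lemma Zn_units_subset_Zn: "Zn_units n \<subseteq> Zn n"
  by (auto simp: Zn_units_def Zn_def)

lemma rescale_inj:
  assumes "w1 \<in> RDH_samples n k" and "w2 \<in> RDH_samples n k" and "j < k"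
    and "[a * b = 1] (mod n)" and "rescale n j a b w1 = rescale n j a b w2"
  shows "w1 = w2"
proof -
  obtain m1 x1 y1 m2 x2 y2 where w: "w1 = (m1, x1, y1)" "w2 = (m2, x2, y2)"
    by (cases w1, cases w2)
  have m: "m1(j := b * m1 j mod n) = m2(j := b * m2 j mod n)"
    and x: "x1(j := (m1 j + x1 j - b * m1 j) mod n) = x2(j := (m2 j + x2 j - b * m2 j) mod n)"
    and y: "y1(j := a * y1 j mod n) = y2(j := a * y2 j mod n)"
    using assms(5) by (simp_all add: w rescale_def)
  have in_Zn: "m1 j \<in> Zn n" "m2 j \<in> Zn n" "x1 j \<in> Zn n" "x2 j \<in> Zn n" "y1 j \<in> Zn n" "y2 j \<in> Zn n"
    using assms(1-3) vecs_memD Zn_units_subset_Zn by (fastforce simp: w RDH_samples_def)+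
  have "coprime a n"
    using assms(4) coprime_iff_invertible_int by blast
  have "coprime b n"
    using assms(4) by (metis coprime_iff_invertible_int mult.commute)
  have "[b * m1 j = b * m2 j] (mod n)"
    using fun_upd_eqD[OF m] by (simp add: cong_def)
  then have mj: "m1 j = m2 j"
    using \<open>coprime b n\<close> in_Zn by (intro eq_if_cong_Zn) (simp_all add: cong_mult_lcancel)
  have "[a * y1 j = a * y2 j] (mod n)"
    using fun_upd_eqD[OF y] by (simp add: cong_def)
  then have yj: "y1 j = y2 j"
    using \<open>coprime a n\<close> in_Zn by (intro eq_if_cong_Zn) (simp_all add: cong_mult_lcancel)
  have "[m1 j + x1 j - b * m1 j = m2 j + x2 j - b * m2 j] (mod n)"
    using fun_upd_eqD[OF x] by (simp add: cong_def)
  then have xj: "x1 j = x2 j"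
    using in_Zn by (intro eq_if_cong_Zn) (simp_all add: mj cong_iff_dvd_diff)
  have "m1 i = m2 i" "x1 i = x2 i" "y1 i = y2 i" if "i \<noteq> j" for i
    using fun_cong[OF m, of i] fun_cong[OF x, of i] fun_cong[OF y, of i] that by simp_all
  with mj xj yj show ?thesis
    unfolding w by (metis ext)
qed

lemma rescaled_weights_cong_zero:
  fixes \<delta> y1 y2 :: "nat \<Rightarrow> int"
  assumes "y1(j := a * y1 j mod n) = y2(j := b * y2 j mod n)" and "j < k"
    and "[\<Sum>i<k. \<delta> i * y1 i = (\<Sum>i<k. \<delta> i * y2 i)] (mod n)"
    and "coprime (a - b) n" and "coprime (y1 j) n"
  shows "[\<delta> j = 0] (mod n)"
proof -
  have "y1 i = y2 i" if "i \<noteq> j" for i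
    using fun_cong[OF assms(1), of i] that by simp
  then have "(\<Sum>i<k. \<delta> i * y1 i) - (\<Sum>i<k. \<delta> i * y2 i) = \<delta> j * y1 j - \<delta> j * y2 j"
    using assms(2) by (simp add: sum_subtractf[symmetric] sum.remove[of "{..<k}" j] right_diff_distrib)
  with assms(3) have \<delta>y: "[\<delta> j * y1 j = \<delta> j * y2 j] (mod n)"
    by (simp add: cong_iff_dvd_diff)
  have ay: "[a * y1 j = b * y2 j] (mod n)"
    using fun_upd_eqD[OF assms(1)] by (simp add: cong_def)
  have "(a - b) * (y1 j * \<delta> j) = \<delta> j * (a * y1 j) - b * (\<delta> j * y1 j)"
    by (simp add: algebra_simps)
  also have "[\<delta> j * (a * y1 j) - b * (\<delta> j * y1 j) = \<delta> j * (b * y2 j) - b * (\<delta> j * y2 j)] (mod n)"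
    by (rule cong_diff[OF cong_scalar_left[OF ay] cong_scalar_left[OF \<delta>y]])
  also have "\<delta> j * (b * y2 j) - b * (\<delta> j * y2 j) = (a - b) * (y1 j * 0)"
    by simp
  finally have "[(a - b) * (y1 j * \<delta> j) = (a - b) * (y1 j * 0)] (mod n)" .
  then show ?thesis
    using assms(4,5) by (simp only: cong_mult_lcancel)
qed

definition successful_samples :: "int \<Rightarrow> nat \<Rightarrow> (rdh_ciphertext \<Rightarrow> rdh_ciphertext) \<Rightarrow> rdh_sample set" where
  "successful_samples n k F = RDH_samples n k \<inter>
     {(m, x, y). let c = RDH_enc n k x y m in F c \<noteq> c \<and> RDH_dec n k x y (F c) \<noteq> None}"

lemma finite_RDH_samples: "finite (RDH_samples n k)"
proof -
  have "finite (Zn n)"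
    by (simp add: Zn_def)
  moreover have "finite (Zn_units n)"
    using Zn_units_subset_Zn calculation by (rule finite_subset)
  ultimately show ?thesis
    by (simp add: RDH_samples_def vecs_def finite_PiE)
qed

lemma RDH_samples_nonempty:
  assumes "n > 1"
  shows "RDH_samples n k \<noteq> {}"
proof -
  have "restrict (\<lambda>_. 0) {..<k} \<in> vecs k (Zn n)" and "restrict (\<lambda>_. 1) {..<k} \<in> vecs k (Zn_units n)"
    using assms by (simp_all add: vecs_def Zn_def Zn_units_def)
  then show ?thesis
    unfolding RDH_samples_def by blast
qed

lemma subst_success_prob_eq_card:
  assumes "n > 1"
  shows "subst_success_prob n k F = card (successful_samples n k F) / card (RDH_samples n k)"
  using measure_pmf_of_set[OF RDH_samples_nonempty[OF assms] finite_RDH_samples]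
  by (simp add: subst_success_prob_def RDH_samples_def successful_samples_def)

definition forged_index :: "(rdh_ciphertext \<Rightarrow> rdh_ciphertext) \<Rightarrow> rdh_ciphertext \<Rightarrow> nat" where
  "forged_index F c = (LEAST j. fst (F c) j \<noteq> fst c j)"

definition substitution_shift ::
    "int \<Rightarrow> nat \<Rightarrow> (rdh_ciphertext \<Rightarrow> rdh_ciphertext) \<Rightarrow> int \<Rightarrow> int \<Rightarrow> rdh_sample \<Rightarrow> rdh_sample" where
  "substitution_shift n k F a b w = rescale n (forged_index F (sample_enc n k w)) a b w"

lemma sample_enc_substitution_shift:
  "[a * b = 1] (mod n) \<Longrightarrow> sample_enc n k (substitution_shift n k F a b w) = sample_enc n k w"
  by (simp add: substitution_shift_def sample_enc_rescale)

context
  fixes n :: int and k :: nat and F :: "rdh_ciphertext \<Rightarrow> rdh_ciphertext"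
  assumes n_gt_1: "n > 1" and F_closed: "\<forall>c \<in> ciphertexts n k. F c \<in> ciphertexts n k"
begin

lemma forged_index_differs:
  assumes "w \<in> successful_samples n k F"
  defines "c \<equiv> sample_enc n k w"
  shows "forged_index F c < k"
    and "[fst (F c) (forged_index F c) \<noteq> fst c (forged_index F c)] (mod n)"
proof -
  obtain m x y where w: "w = (m, x, y)" by (cases w)
  have c: "c \<in> ciphertexts n k"
    using n_gt_1 by (simp add: c_def w sample_enc_def RDH_enc_in_ciphertexts)
  then have Fc: "F c \<in> ciphertexts n k"
    using F_closed by blast
  have forged: "F c \<noteq> c" and valid: "RDH_dec n k x y (F c) \<noteq> None"
    using assms(1) by (simp_all add: successful_samples_def c_def w sample_enc_def Let_def)
  obtain u t where u_t: "F c = (u, t)" by (cases "F c")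
  have u: "u \<in> vecs k (Zn n)" and fst_c: "fst c \<in> vecs k (Zn n)"
    using c Fc u_t by (auto simp: ciphertexts_def)
  have "u \<noteq> fst c"
  proof
    assume "u = fst c"
    moreover have "[(\<Sum>i<k. (u i - fst c i) * y i) + snd c = t] (mod n)"
      using RDH_dec_not_None_cong[of n k x y u t m] valid u_t by (simp add: c_def w sample_enc_def)
    ultimately have "[snd c = t] (mod n)" by simp
    then have "snd c = t"
      using c Fc u_t by (intro eq_if_cong_Zn) (auto simp: ciphertexts_def)
    with \<open>u = fst c\<close> forged u_t show False
      by (simp add: prod_eq_iff)
  qed
  then have j: "forged_index F c < k" and differ: "u (forged_index F c) \<noteq> fst c (forged_index F c)"
    using LEAST_differ_vecs[OF u fst_c] by (simp_all add: forged_index_def u_t)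
  show "forged_index F c < k"
    by (fact j)
  show "[fst (F c) (forged_index F c) \<noteq> fst c (forged_index F c)] (mod n)"
    using differ eq_if_cong_Zn[OF vecs_memD[OF u j] vecs_memD[OF fst_c j]] u_t by auto
qed

lemma substitution_shift_in_samples:
  assumes "w \<in> successful_samples n k F" and "[a * b = 1] (mod n)"
  shows "substitution_shift n k F a b w \<in> RDH_samples n k"
proof -
  obtain m x y where w: "w = (m, x, y)" by (cases w)
  define j where "j = forged_index F (sample_enc n k w)"
  have j: "j < k"
    using forged_index_differs(1) assms(1) by (simp add: j_def)
  have m: "m \<in> vecs k (Zn n)" and x: "x \<in> vecs k (Zn n)" and y: "y \<in> vecs k (Zn_units n)"
    using assms(1) by (simp_all add: w successful_samples_def RDH_samples_def)
  have "coprime a n"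
    using assms(2) coprime_iff_invertible_int by blast
  moreover have "coprime (y j) n"
    using vecs_memD[OF y j] by (simp add: Zn_units_def)
  ultimately have "a * y j mod n \<in> Zn_units n"
    using n_gt_1 by (simp add: Zn_units_def)
  then have "y(j := a * y j mod n) \<in> vecs k (Zn_units n)"
    using y j by (rule vecs_fun_upd[rotated 2])
  moreover have "m(j := b * m j mod n) \<in> vecs k (Zn n)" and "x(j := (m j + x j - b * m j) mod n) \<in> vecs k (Zn n)"
    using m x j n_gt_1 by (simp_all add: vecs_fun_upd Zn_mod)
  moreover have "substitution_shift n k F a b w
      = (m(j := b * m j mod n), x(j := (m j + x j - b * m j) mod n), y(j := a * y j mod n))"
    by (simp add: substitution_shift_def rescale_def j_def w)
  ultimately show ?thesis
    by (simp add: RDH_samples_def)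
qed

lemma inj_on_substitution_shift:
  assumes "[a * b = 1] (mod n)"
  shows "inj_on (substitution_shift n k F a b) (successful_samples n k F)"
proof (rule inj_onI)
  fix w1 w2
  assume w1: "w1 \<in> successful_samples n k F"
    and w2: "w2 \<in> successful_samples n k F"
    and eq: "substitution_shift n k F a b w1 = substitution_shift n k F a b w2"
  have "sample_enc n k w1 = sample_enc n k w2"
    using arg_cong[OF eq, of "sample_enc n k"] by (simp add: sample_enc_substitution_shift[OF assms])
  with eq have "rescale n (forged_index F (sample_enc n k w1)) a b w1
      = rescale n (forged_index F (sample_enc n k w1)) a b w2"
    by (simp add: substitution_shift_def)
  moreover have "forged_index F (sample_enc n k w1) < k"
    using w1 by (simp add: forged_index_differs(1))
  moreover have "w1 \<in> RDH_samples n k" and "w2 \<in> RDH_samples n k"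
    using w1 w2 by (simp_all add: successful_samples_def)
  ultimately show "w1 = w2"
    using assms rescale_inj by blast
qed

lemma substitution_shift_images_disjoint:
  assumes "[a * a' = 1] (mod n)" and "[b * b' = 1] (mod n)" and "coprime (a - b) n"
  shows "substitution_shift n k F a a' ` (successful_samples n k F)
    \<inter> substitution_shift n k F b b' ` (successful_samples n k F) = {}"
proof (rule ccontr)
  assume "\<not> ?thesis"
  then obtain w1 w2 where w1: "w1 \<in> successful_samples n k F"
    and w2: "w2 \<in> successful_samples n k F"
    and eq: "substitution_shift n k F a a' w1 = substitution_shift n k F b b' w2"
    by blast
  obtain m1 x1 y1 m2 x2 y2 where w: "w1 = (m1, x1, y1)" "w2 = (m2, x2, y2)"
    by (cases w1, cases w2)
  define c where "c = sample_enc n k w1"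
  define j where "j = forged_index F c"
  obtain u t where u_t: "F c = (u, t)" by (cases "F c")
  define \<delta> where "\<delta> i = u i - fst c i" for i
  have c2: "sample_enc n k w2 = c"
    using arg_cong[OF eq, of "sample_enc n k"]
    by (simp add: c_def sample_enc_substitution_shift[OF assms(1)] sample_enc_substitution_shift[OF assms(2)])
  then have "rescale n j a a' w1 = rescale n j b b' w2"
    using eq by (simp add: substitution_shift_def j_def c_def)
  then have y: "y1(j := a * y1 j mod n) = y2(j := b * y2 j mod n)"
    by (simp add: rescale_def w)
  have j: "j < k" and not_cong: "[u j \<noteq> fst c j] (mod n)"
    using forged_index_differs[of w1] w1 u_t by (simp_all add: j_def c_def)
  have "[(\<Sum>i<k. \<delta> i * y1 i) + snd c = t] (mod n)"
    using RDH_dec_not_None_cong[of n k x1 y1 u t m1] w1 u_t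
    by (simp add: \<delta>_def c_def w sample_enc_def successful_samples_def Let_def)
  moreover have "[(\<Sum>i<k. \<delta> i * y2 i) + snd c = t] (mod n)"
    using RDH_dec_not_None_cong[of n k x2 y2 u t m2] w2 u_t c2
    by (simp add: \<delta>_def w sample_enc_def successful_samples_def Let_def)
  ultimately have "[(\<Sum>i<k. \<delta> i * y1 i) + snd c = (\<Sum>i<k. \<delta> i * y2 i) + snd c] (mod n)"
    by (rule cong_trans[OF _ cong_sym])
  then have "[\<Sum>i<k. \<delta> i * y1 i = (\<Sum>i<k. \<delta> i * y2 i)] (mod n)"
    by (simp only: cong_add_rcancel)
  moreover have "coprime (y1 j) n"
    using w1 j vecs_memD by (fastforce simp: w successful_samples_def RDH_samples_def Zn_units_def)
  ultimately have "[\<delta> j = 0] (mod n)"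
    using rescaled_weights_cong_zero[OF y j] assms(3) by blast
  with not_cong show False
    by (simp add: \<delta>_def cong_iff_dvd_diff cong_0_iff)
qed

end

theorem mainTheorem7:
  fixes n p :: int and k :: nat
    and F :: "(nat \<Rightarrow> int) \<times> int \<Rightarrow> (nat \<Rightarrow> int) \<times> int"
  assumes "n > 1" and "odd n" and "k \<ge> 1"
    and "prime p" and "p dvd n" and "\<forall>q. prime q \<and> q dvd n \<longrightarrow> p \<le> q"
    and "\<forall>c \<in> ciphertexts n k. F c \<in> ciphertexts n k"
  shows "subst_success_prob n k F \<le> 1 / (real_of_int p - 1)"
proof -
  define I where "I = {1..p - 1}"
  have p: "p \<ge> 2"
    using assms(4) by (rule prime_ge_2_int)
  have coprime_diff: "coprime (a - b) n" if "a \<in> insert 0 I" and "b \<in> insert 0 I" and "a \<noteq> b" for a b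
    using that assms(6) by (intro coprime_if_abs_less_prime_divisors) (auto simp: I_def)
  have "\<forall>a\<in>I. \<exists>a'. [a * a' = 1] (mod n)"
    using coprime_diff[of _ 0] cong_solve_coprime_int by (simp add: I_def)
  then obtain inv where inv: "\<And>a. a \<in> I \<Longrightarrow> [a * inv a = 1] (mod n)"
    by metis
  have "card I * card (successful_samples n k F) \<le> card (RDH_samples n k)"
  proof (rule card_le_of_disjoint_injective_images[where f = "\<lambda>a. substitution_shift n k F a (inv a)"])
    fix a b assume "a \<in> I" and "b \<in> I" and "a \<noteq> b"
    then show "substitution_shift n k F a (inv a) ` successful_samples n k F
        \<inter> substitution_shift n k F b (inv b) ` successful_samples n k F = {}"
      by (intro substitution_shift_images_disjoint[OF assms(1,7) inv inv coprime_diff]) simp_all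
  qed (use inv substitution_shift_in_samples[OF assms(1,7)] inj_on_substitution_shift[OF assms(1,7)]
      in \<open>auto simp: I_def finite_RDH_samples\<close>)
  then have "real (card I * card (successful_samples n k F)) \<le> real (card (RDH_samples n k))"
    by (rule of_nat_mono)
  then have "(real_of_int p - 1) * card (successful_samples n k F) \<le> card (RDH_samples n k)"
    using p by (simp add: I_def)
  moreover have "card (RDH_samples n k) > 0"
    using assms(1) finite_RDH_samples RDH_samples_nonempty by (simp add: card_gt_0_iff)
  ultimately show ?thesis
    using p by (simp add: subst_success_prob_eq_card[OF assms(1)] field_simps)
qed

end
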